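(* For a (finite simple) graph $G$, the following are equivalent: (1) $G$ is threshold; (2) the clique hypergraph ${\cal C}(G)$ is $1$-Sperner; (3) ${\cal C}(G)$ is threshold; (4) ${\cal C}(G)$ is $2$-asummable.
   Context: A hypergraph ${\cal H}=(V,{\cal E})$ consists of a finite vertex set $V$ and a set ${\cal E}$ of subsets of $V$. A set $X\subseteq V$ is dependent if it contains some hyperedge, and independent otherwise. ${\cal H}$ is threshold if there exist $w:V\to\mathbb{Z}_{\ge0}$ and $t\in\mathbb{Z}_{\ge0}$ such that for every $X\subseteq V$, $\sum_{x\in X}w(x)\ge t$ iff $X$ is dependent. A graph is threshold if, viewed as the hypergraph $(V(G),E(G))$ whose hyperedges are its edges, it is threshold. ${\cal H}$ is $1$-Sperner if every two distinct hyperedges $e,f$ satisfy $\min\{|e\setminus f|,|f\setminus e|\}=1$. ${\cal H}$ is $2$-asummable if there are no independent sets $A_1,A_2$ and dependent sets $B_1,B_2$ (not necessarily distinct) with $\chi^{A_1}+\chi^{A_2}=\chi^{B_1}+\chi^{B_2}$, where $\chi^S\in\{0,1\}^V$ is the characteristic vector of $S$. The clique hypergraph ${\cal C}(G)$ has vertex set $V(G)$ and hyperedges the maximal cliques of $G$. *)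

theory Defs
  imports Main
begin

definition hypergraph :: "'a set \<Rightarrow> 'a set set \<Rightarrow> bool" where
  "hypergraph V Es \<longleftrightarrow> finite V \<and> (\<forall>e\<in>Es. e \<subseteq> V)"

definition dependent :: "'a set set \<Rightarrow> 'a set \<Rightarrow> bool" where
  "dependent Es X \<longleftrightarrow> (\<exists>e\<in>Es. e \<subseteq> X)"

definition threshold_hg :: "'a set \<Rightarrow> 'a set set \<Rightarrow> bool" where
  "threshold_hg V Es \<longleftrightarrow> (\<exists>(w::'a \<Rightarrow> nat) (t::nat).
     \<forall>X. X \<subseteq> V \<longrightarrow> ((\<Sum>x\<in>X. w x) \<ge> t \<longleftrightarrow> dependent Es X))"

definition one_sperner :: "'a set set \<Rightarrow> bool" where
  "one_sperner Es \<longleftrightarrow> (\<forall>e\<in>Es. \<forall>f\<in>Es. e \<noteq> f \<longrightarrow> min (card (e - f)) (card (f - e)) = 1)"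

definition chi :: "'a set \<Rightarrow> 'a \<Rightarrow> nat" where
  "chi S x = (if x \<in> S then 1 else 0)"

definition two_asummable :: "'a set \<Rightarrow> 'a set set \<Rightarrow> bool" where
  "two_asummable V Es \<longleftrightarrow> \<not> (\<exists>A1 A2 B1 B2.
     A1 \<subseteq> V \<and> A2 \<subseteq> V \<and> B1 \<subseteq> V \<and> B2 \<subseteq> V \<and>
     \<not> dependent Es A1 \<and> \<not> dependent Es A2 \<and> dependent Es B1 \<and> dependent Es B2 \<and>
     (\<forall>x\<in>V. chi A1 x + chi A2 x = chi B1 x + chi B2 x))"

definition simple_graph :: "'a set \<Rightarrow> 'a set set \<Rightarrow> bool" where
  "simple_graph V E \<longleftrightarrow> finite V \<and> (\<forall>e\<in>E. e \<subseteq> V \<and> card e = 2)"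

definition threshold_graph :: "'a set \<Rightarrow> 'a set set \<Rightarrow> bool" where
  "threshold_graph V E \<longleftrightarrow> threshold_hg V E"

definition clique :: "'a set \<Rightarrow> 'a set set \<Rightarrow> 'a set \<Rightarrow> bool" where
  "clique V E K \<longleftrightarrow> K \<subseteq> V \<and> (\<forall>x\<in>K. \<forall>y\<in>K. x \<noteq> y \<longrightarrow> {x, y} \<in> E)"

definition maximal_clique :: "'a set \<Rightarrow> 'a set set \<Rightarrow> 'a set \<Rightarrow> bool" where
  "maximal_clique V E K \<longleftrightarrow> clique V E K \<and> (\<forall>K'. clique V E K' \<and> K \<subseteq> K' \<longrightarrow> K' = K)"

definition clique_edges :: "'a set \<Rightarrow> 'a set set \<Rightarrow> 'a set set" where
  "clique_edges V E = {K. maximal_clique V E K}"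

end

theory Submission
  imports Defs
begin

text \<open>Everything is equivalent to the absence of an alternating 4-cycle: edges \<open>ab\<close>, \<open>cd\<close> and
  non-edges \<open>ac\<close>, \<open>bd\<close>. Without one, every induced subgraph has an isolated or a dominating
  vertex, and adding such a vertex keeps both \<open>G\<close> and its clique hypergraph threshold, by explicit
  updates of the weights. Two distinct maximal cliques \<open>e\<close>, \<open>f\<close> then differ by one vertex on some
  side, because non-adjacency between \<open>e - f\<close> and \<open>f - e\<close> leaves no vertex out but contains no two
  disjoint pairs. Conversely, an alternating 4-cycle gives \<open>{a,c} + {b,d} = {a,b} + {c,d}\<close>, which
  violates 2-asummability of \<open>G\<close>, and two maximal cliques differing by two vertices on each side.
  For such cliques, exchanging a suitable \<open>x \<in> e - f\<close> with \<open>y \<in> f - e\<close> produces two independent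
  sets with the same characteristic sum as \<open>e\<close> and \<open>f\<close>, so 2-asummability implies 1-Sperner.\<close>

lemma sum_fun_upd:
  assumes "finite X"
  shows "sum (w(v := c)) X = sum w (X - {v}) + (if v \<in> X then c else 0)"
proof -
  have "sum (w(v := c)) (X - {v}) = sum w (X - {v})" by (rule sum.cong) auto
  then show ?thesis
    using sum.remove[OF assms, of v "w(v := c)"] by (cases "v \<in> X") (simp_all add: add.commute)
qed

lemma mult_le_mult_add_iff:
  fixes M s t c :: nat
  assumes "c < M"
  shows "M * t \<le> M * s + c \<longleftrightarrow> t \<le> s"
proof
  assume "M * t \<le> M * s + c"
  then have "M * t < M * (s + 1)" using assms by (simp add: distrib_left)
  then show "t \<le> s" by (simp only: mult_less_cancel1) simp
qed (simp add: trans_le_add1)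

definition threshold_on :: "'a set \<Rightarrow> ('a set \<Rightarrow> bool) \<Rightarrow> bool" where
  "threshold_on U P \<longleftrightarrow> (\<exists>(w::'a \<Rightarrow> nat) t. \<forall>X\<subseteq>U. t \<le> sum w X \<longleftrightarrow> P X)"

lemma threshold_hg_iff_threshold_on: "threshold_hg V Es \<longleftrightarrow> threshold_on V (dependent Es)"
  unfolding threshold_hg_def threshold_on_def by blast

lemma threshold_on_empty: "threshold_on {} P"
  unfolding threshold_on_def
  by (rule exI[of _ "\<lambda>_. 0"], rule exI[of _ "if P {} then 0 else 1"]) simp

lemma threshold_on_insert_inessential:
  assumes "finite U" "threshold_on U P" "v \<notin> U"
    and "\<And>X. X \<subseteq> insert v U \<Longrightarrow> Q X \<longleftrightarrow> P (X - {v})"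
  shows "threshold_on (insert v U) Q"
proof -
  obtain w :: "'a \<Rightarrow> nat" and t where wt: "\<And>X. X \<subseteq> U \<Longrightarrow> t \<le> sum w X \<longleftrightarrow> P X"
    using assms(2) unfolding threshold_on_def by blast
  have "t \<le> sum (w(v := 0)) X \<longleftrightarrow> Q X" if X: "X \<subseteq> insert v U" for X
  proof -
    have "finite X" "X - {v} \<subseteq> U" using X assms(1) by (auto intro: finite_subset)
    then show ?thesis using wt assms(4)[OF X] sum_fun_upd[of X w v 0] by simp
  qed
  then show ?thesis unfolding threshold_on_def by blast
qed

lemma threshold_on_insert_or:
  assumes "finite U" "threshold_on U P" "v \<notin> U"
    and "\<And>X. X \<subseteq> insert v U \<Longrightarrow> Q X \<longleftrightarrow> v \<in> X \<or> P X"
  shows "threshold_on (insert v U) Q"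
proof -
  obtain w :: "'a \<Rightarrow> nat" and t where wt: "\<And>X. X \<subseteq> U \<Longrightarrow> t \<le> sum w X \<longleftrightarrow> P X"
    using assms(2) unfolding threshold_on_def by blast
  have "t \<le> sum (w(v := t)) X \<longleftrightarrow> Q X" if X: "X \<subseteq> insert v U" for X
  proof (cases "v \<in> X")
    case True
    moreover have "finite X" using X assms(1) by (auto intro: finite_subset)
    ultimately show ?thesis using assms(4)[OF X] sum_fun_upd[of X w v t] by simp
  next
    case False
    then have "X \<subseteq> U" "sum (w(v := t)) X = sum w X" using X by (auto intro: sum.cong)
    then show ?thesis using False wt assms(4)[OF X] by simp
  qed
  then show ?thesis unfolding threshold_on_def by blast
qed

lemma threshold_on_insert_and:
  assumes "finite U" "threshold_on U P" "v \<notin> U"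
    and "\<And>X. X \<subseteq> insert v U \<Longrightarrow> Q X \<longleftrightarrow> v \<in> X \<and> P (X - {v})"
  shows "threshold_on (insert v U) Q"
proof -
  obtain w :: "'a \<Rightarrow> nat" and t where wt: "\<And>X. X \<subseteq> U \<Longrightarrow> t \<le> sum w X \<longleftrightarrow> P X"
    using assms(2) unfolding threshold_on_def by blast
  define B where "B = sum w U + 1"
  have "t + B \<le> sum (w(v := B)) X \<longleftrightarrow> Q X" if X: "X \<subseteq> insert v U" for X
  proof -
    have "X - {v} \<subseteq> U" using X by blast
    then have "sum w (X - {v}) < B"
      using sum_mono2[OF assms(1) \<open>X - {v} \<subseteq> U\<close>, of w] unfolding B_def by simp
    moreover have "sum (w(v := B)) X = sum w (X - {v}) + (if v \<in> X then B else 0)"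
      using X assms(1) by (intro sum_fun_upd) (meson finite_insert finite_subset)
    ultimately show ?thesis
      using wt[OF \<open>X - {v} \<subseteq> U\<close>] assms(4)[OF X] by (cases "v \<in> X") simp_all
  qed
  then show ?thesis unfolding threshold_on_def by blast
qed

text \<open>Scaling the old weights by \<open>M > |U|\<close> and adding \<open>1\<close> to each keeps the old threshold
  behaviour, while the new vertex brings every nonempty set over the threshold.\<close>

lemma threshold_on_insert_if_nonempty:
  assumes "finite U" "threshold_on U P" "\<not> P {}" "v \<notin> U"
    and "\<And>X. X \<subseteq> insert v U \<Longrightarrow> Q X \<longleftrightarrow> (if v \<in> X then X - {v} \<noteq> {} else P X)"
  shows "threshold_on (insert v U) Q"
proof -
  obtain w :: "'a \<Rightarrow> nat" and t where wt: "\<And>X. X \<subseteq> U \<Longrightarrow> t \<le> sum w X \<longleftrightarrow> P X"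
    using assms(2) unfolding threshold_on_def by blast
  have "t > 0" using wt[of "{}"] assms(3) by simp
  define M where "M = card U + 1"
  define w' where "w' = (\<lambda>x. M * w x + 1)(v := M * t - 1)"
  have "M * t \<le> sum w' X \<longleftrightarrow> Q X" if X: "X \<subseteq> insert v U" for X
  proof -
    define Y where "Y = X - {v}"
    have "Y \<subseteq> U" "finite X" using X assms(1) unfolding Y_def by (auto intro: finite_subset)
    have "finite Y" using \<open>Y \<subseteq> U\<close> assms(1) by (rule finite_subset)
    have "card Y < M" using card_mono[OF assms(1) \<open>Y \<subseteq> U\<close>] unfolding M_def by simp
    have "sum w' Y = (\<Sum>x\<in>Y. M * w x + 1)" unfolding w'_def Y_def by (rule sum.cong) auto
    also have "\<dots> = M * sum w Y + card Y" unfolding sum.distrib sum_distrib_left by simp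
    finally have sum_Y: "sum w' Y = M * sum w Y + card Y" .
    have sum_X: "sum w' X = M * sum w Y + card Y + (if v \<in> X then M * t - 1 else 0)"
      using sum_fun_upd[OF \<open>finite X\<close>, of "\<lambda>x. M * w x + 1" v "M * t - 1"] sum_Y
      unfolding w'_def Y_def by simp
    show ?thesis
    proof (cases "v \<in> X")
      case True
      have "M * t > 0" using \<open>t > 0\<close> unfolding M_def by simp
      moreover have "sum w' X = M * sum w Y + card Y + (M * t - 1)" using sum_X True by simp
      ultimately have "M * t \<le> sum w' X \<longleftrightarrow> 0 < M * sum w Y + card Y" by linarith
      also have "\<dots> \<longleftrightarrow> Y \<noteq> {}" using \<open>finite Y\<close> by (auto simp: card_gt_0_iff)
      finally show ?thesis using assms(5)[OF X] True unfolding Y_def by simp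
    next
      case False
      then have "Y = X" unfolding Y_def by simp
      then show ?thesis
        using sum_X False assms(5)[OF X] wt[OF \<open>Y \<subseteq> U\<close>]
          mult_le_mult_add_iff[OF \<open>card Y < M\<close>] by simp
    qed
  qed
  then show ?thesis unfolding threshold_on_def by blast
qed

lemma sum_eq_sum_chi:
  assumes "finite V" "A \<subseteq> V"
  shows "sum w A = (\<Sum>x\<in>V. chi A x * w x)"
proof -
  have "(\<Sum>x\<in>V. chi A x * w x) = (\<Sum>x\<in>V. if x \<in> A then w x else 0)"
    by (rule sum.cong) (auto simp: chi_def)
  also have "\<dots> = sum w A"
    using sum.inter_restrict[OF assms(1), of w A] assms(2) by (simp add: Int_absorb1)
  finally show ?thesis by simp
qed

lemma two_asummable_if_threshold_hg:
  assumes "finite V" "threshold_hg V Es"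
  shows "two_asummable V Es"
  unfolding two_asummable_def
proof clarify
  fix A1 A2 B1 B2
  assume sub: "A1 \<subseteq> V" "A2 \<subseteq> V" "B1 \<subseteq> V" "B2 \<subseteq> V"
    and dep: "\<not> dependent Es A1" "\<not> dependent Es A2" "dependent Es B1" "dependent Es B2"
    and chi_eq: "\<forall>x\<in>V. chi A1 x + chi A2 x = chi B1 x + chi B2 x"
  obtain w :: "'a \<Rightarrow> nat" and t where wt: "\<And>X. X \<subseteq> V \<Longrightarrow> t \<le> sum w X \<longleftrightarrow> dependent Es X"
    using assms(2) unfolding threshold_hg_def by blast
  have "sum w A1 + sum w A2 = (\<Sum>x\<in>V. (chi A1 x + chi A2 x) * w x)"
    using sum_eq_sum_chi[OF assms(1) sub(1)] sum_eq_sum_chi[OF assms(1) sub(2)]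
    by (simp add: sum.distrib distrib_right)
  also have "\<dots> = (\<Sum>x\<in>V. (chi B1 x + chi B2 x) * w x)"
    using chi_eq by simp
  also have "\<dots> = sum w B1 + sum w B2"
    using sum_eq_sum_chi[OF assms(1) sub(3)] sum_eq_sum_chi[OF assms(1) sub(4)]
    by (simp add: sum.distrib distrib_right)
  finally show False
    using wt[OF sub(1)] wt[OF sub(2)] wt[OF sub(3)] wt[OF sub(4)] dep by linarith
qed

lemma simple_graph_finite_subset: "simple_graph V E \<Longrightarrow> U \<subseteq> V \<Longrightarrow> finite U"
  unfolding simple_graph_def by (blast intro: finite_subset)

lemma simple_graph_edge_distinct: "simple_graph V E \<Longrightarrow> {x, y} \<in> E \<Longrightarrow> x \<noteq> y"
  unfolding simple_graph_def by fastforce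

lemma simple_graph_edge_in_vertices: "simple_graph V E \<Longrightarrow> {x, y} \<in> E \<Longrightarrow> x \<in> V \<and> y \<in> V"
  unfolding simple_graph_def by blast

lemma simple_graph_edgeE:
  assumes "simple_graph V E" "e \<in> E"
  obtains x y where "e = {x, y}" "x \<noteq> y"
  using assms unfolding simple_graph_def by (meson card_2_iff)

lemma dependent_doubleton_iff:
  assumes "simple_graph V E"
  shows "dependent E {x, y} \<longleftrightarrow> {x, y} \<in> E"
proof
  assume "dependent E {x, y}"
  then obtain e where e: "e \<in> E" "e \<subseteq> {x, y}" unfolding dependent_def by blast
  then obtain p q where "e = {p, q}" "p \<noteq> q" using simple_graph_edgeE[OF assms] by blast
  with e have "e = {x, y}" by auto
  with e show "{x, y} \<in> E" by simp
qed (auto simp: dependent_def)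

text \<open>An induced \<open>2K\<^sub>2\<close>, \<open>P\<^sub>4\<close> or \<open>C\<^sub>4\<close>, the forbidden configuration of threshold graphs.\<close>

definition alternating_4_cycle :: "'a set set \<Rightarrow> 'a \<Rightarrow> 'a \<Rightarrow> 'a \<Rightarrow> 'a \<Rightarrow> bool" where
  "alternating_4_cycle E a b c d \<longleftrightarrow>
     a \<noteq> c \<and> b \<noteq> d \<and> {a, b} \<in> E \<and> {c, d} \<in> E \<and> {a, c} \<notin> E \<and> {b, d} \<notin> E"

lemma no_alternating_4_cycle_if_two_asummable:
  assumes G: "simple_graph V E" and "two_asummable V E"
  shows "\<not> alternating_4_cycle E a b c d"
proof
  assume "alternating_4_cycle E a b c d"
  then have ac: "a \<noteq> c" "b \<noteq> d" "{a, b} \<in> E" "{c, d} \<in> E" "{a, c} \<notin> E" "{b, d} \<notin> E"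
    unfolding alternating_4_cycle_def by blast+
  have "a \<noteq> b" "c \<noteq> d" using ac(3,4) simple_graph_edge_distinct[OF G] by blast+
  moreover have "a \<noteq> d" using ac(4,5) by (metis insert_commute)
  moreover have "b \<noteq> c" using ac(3,5) by blast
  ultimately have chi_eq: "\<forall>x\<in>V. chi {a, c} x + chi {b, d} x = chi {a, b} x + chi {c, d} x"
    using ac(1,2) by (auto simp: chi_def)
  have sub: "{a, b} \<subseteq> V" "{c, d} \<subseteq> V" "{a, c} \<subseteq> V" "{b, d} \<subseteq> V"
    using simple_graph_edge_in_vertices[OF G ac(3)] simple_graph_edge_in_vertices[OF G ac(4)]
    by auto
  have dep: "dependent E {a, b}" "dependent E {c, d}" "\<not> dependent E {a, c}" "\<not> dependent E {b, d}"
    using ac(3-6) dependent_doubleton_iff[OF G] by simp_all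
  from assms(2) show False
    unfolding two_asummable_def using sub dep chi_eq by blast
qed

text \<open>A vertex \<open>v\<close> of maximum degree is either dominating, or any non-neighbour \<open>u\<close> of it is
  isolated: a neighbour \<open>x\<close> of \<open>u\<close> would be adjacent to \<open>u\<close>, to all neighbours of \<open>v\<close>
  and (if they are adjacent) to \<open>v\<close>, and so have larger degree than \<open>v\<close>.\<close>

lemma isolated_or_dominating_vertex:
  assumes G: "simple_graph V E" and no_ac4: "\<And>a b c d. \<not> alternating_4_cycle E a b c d"
    and U: "U \<subseteq> V" "U \<noteq> {}"
  shows "\<exists>v\<in>U. (\<forall>y\<in>U. {v, y} \<notin> E) \<or> (\<forall>y\<in>U - {v}. {v, y} \<in> E)"
proof -
  define N where "N z = {y \<in> U. {z, y} \<in> E}" for z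
  have "finite U" using simple_graph_finite_subset[OF G U(1)] .
  then have fin_N: "finite (N z)" for z unfolding N_def by simp
  have "Max ((\<lambda>z. card (N z)) ` U) \<in> (\<lambda>z. card (N z)) ` U"
    using \<open>finite U\<close> U(2) by (intro Max_in) auto
  then obtain v where v: "v \<in> U" "card (N v) = Max ((\<lambda>z. card (N z)) ` U)" by auto
  have v_max: "card (N z) \<le> card (N v)" if "z \<in> U" for z
    using v(2) \<open>finite U\<close> that by simp
  show ?thesis
  proof (cases "\<forall>y\<in>U - {v}. {v, y} \<in> E")
    case True
    then show ?thesis using v(1) by blast
  next
    case False
    then obtain u where u: "u \<in> U" "u \<noteq> v" "{v, u} \<notin> E" by blast
    have "{u, x} \<notin> E" if "x \<in> U" for x
    proof
      assume ux: "{u, x} \<in> E"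
      have adj: "{x, y} \<in> E" if "y \<in> N v" "y \<noteq> x" for y
        using no_ac4[of u x v y] u ux that unfolding alternating_4_cycle_def N_def
        by (auto simp: insert_commute)
      define f where "f y = (if y = x then v else y)" for y
      have "v \<notin> N v" using simple_graph_edge_distinct[OF G] unfolding N_def by blast
      then have "inj_on f (N v)" unfolding f_def inj_on_def by auto
      moreover have "u \<notin> f ` N v" using u unfolding f_def N_def by auto
      ultimately have "card (insert u (f ` N v)) = card (N v) + 1"
        using fin_N by (simp add: card_image)
      moreover have "u \<in> N x" using u(1) ux unfolding N_def by (simp add: insert_commute)
      moreover have "f y \<in> N x" if "y \<in> N v" for y
      proof (cases "y = x")
        case True
        then show ?thesis using that v(1) unfolding f_def N_def by (simp add: insert_commute)
      next
        case False
        then show ?thesis using that adj unfolding f_def N_def by simp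
      qed
      ultimately have "card (N v) + 1 \<le> card (N x)"
        using card_mono[OF fin_N, of "insert u (f ` N v)" x] by auto
      then show False using v_max[OF \<open>x \<in> U\<close>] by simp
    qed
    then show ?thesis using u(1) by blast
  qed
qed

lemma no_alternating_4_cycle_induct[consumes 3, case_names empty isolated dominating]:
  assumes G: "simple_graph V E" and no_ac4: "\<And>a b c d. \<not> alternating_4_cycle E a b c d"
    and "U \<subseteq> V"
    and empty: "R {}"
    and isolated: "\<And>U v. U \<subseteq> V \<Longrightarrow> v \<notin> U \<Longrightarrow> U \<noteq> {} \<Longrightarrow> \<forall>y\<in>U. {v, y} \<notin> E \<Longrightarrow>
      R U \<Longrightarrow> R (insert v U)"
    and dominating: "\<And>U v. U \<subseteq> V \<Longrightarrow> v \<notin> U \<Longrightarrow> \<forall>y\<in>U. {v, y} \<in> E \<Longrightarrow>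
      R U \<Longrightarrow> R (insert v U)"
  shows "R U"
proof -
  from simple_graph_finite_subset[OF G \<open>U \<subseteq> V\<close>] \<open>U \<subseteq> V\<close> show ?thesis
  proof (induction U rule: finite_psubset_induct)
    case (psubset U)
    show ?case
    proof (cases "U = {}")
      case True
      then show ?thesis using empty by simp
    next
      case False
      then obtain v where v: "v \<in> U"
        and iso_dom: "(\<forall>y\<in>U. {v, y} \<notin> E) \<or> (\<forall>y\<in>U - {v}. {v, y} \<in> E)"
        using isolated_or_dominating_vertex[OF G no_ac4 psubset.prems] by blast
      have "U - {v} \<subseteq> V" "v \<notin> U - {v}" "insert v (U - {v}) = U"
        using v psubset.prems by auto
      moreover have "R (U - {v})" using psubset.IH[of "U - {v}"] v psubset.prems by blast
      moreover have "U - {v} \<noteq> {} \<and> (\<forall>y\<in>U - {v}. {v, y} \<notin> E) \<or> (\<forall>y\<in>U - {v}. {v, y} \<in> E)"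
        using iso_dom by blast
      ultimately show ?thesis using isolated dominating by metis
    qed
  qed
qed

lemma dependent_insert_isolated_iff:
  assumes G: "simple_graph V E" and "\<forall>y\<in>U. {v, y} \<notin> E" and X: "X \<subseteq> insert v U"
  shows "dependent E X \<longleftrightarrow> dependent E (X - {v})"
proof
  assume "dependent E X"
  then obtain e where e: "e \<in> E" "e \<subseteq> X" unfolding dependent_def by blast
  then obtain p q where pq: "e = {p, q}" "p \<noteq> q" using simple_graph_edgeE[OF G] by blast
  have "v \<notin> e" using assms(2) e X pq(2) unfolding pq(1) by (auto simp: insert_commute)
  then show "dependent E (X - {v})" using e unfolding dependent_def by blast
qed (auto simp: dependent_def)

lemma dependent_insert_dominating_iff:
  assumes G: "simple_graph V E" and "\<forall>y\<in>U. {v, y} \<in> E" and "X \<subseteq> insert v U" "v \<in> X"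
  shows "dependent E X \<longleftrightarrow> X - {v} \<noteq> {}"
proof
  assume "dependent E X"
  then obtain e where e: "e \<in> E" "e \<subseteq> X" unfolding dependent_def by blast
  then obtain p q where "e = {p, q}" "p \<noteq> q" using simple_graph_edgeE[OF G] by blast
  with e show "X - {v} \<noteq> {}" by auto
next
  assume "X - {v} \<noteq> {}"
  then obtain y where "y \<in> X" "y \<noteq> v" by blast
  then have "{v, y} \<in> E" "{v, y} \<subseteq> X" using assms(2-4) by auto
  then show "dependent E X" unfolding dependent_def by blast
qed

lemma threshold_graph_if_no_alternating_4_cycle:
  assumes G: "simple_graph V E" and no_ac4: "\<And>a b c d. \<not> alternating_4_cycle E a b c d"
  shows "threshold_graph V E"
proof -
  have "threshold_on U (dependent E)" if "U \<subseteq> V" for U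
    using G no_ac4 that
  proof (induction rule: no_alternating_4_cycle_induct)
    case empty
    show ?case by (rule threshold_on_empty)
  next
    case (isolated U v)
    show ?case
      using threshold_on_insert_inessential[OF simple_graph_finite_subset[OF G isolated.hyps(1)]
          isolated.IH isolated.hyps(2)]
        dependent_insert_isolated_iff[OF G isolated.hyps(4)] by blast
  next
    case (dominating U v)
    have "\<not> dependent E {}" using G unfolding dependent_def simple_graph_def by auto
    moreover have "dependent E X \<longleftrightarrow> (if v \<in> X then X - {v} \<noteq> {} else dependent E X)"
      if "X \<subseteq> insert v U" for X
      using dependent_insert_dominating_iff[OF G dominating.hyps(3) that] by simp
    ultimately show ?case
      using threshold_on_insert_if_nonempty[OF simple_graph_finite_subset[OF G dominating.hyps(1)]
          dominating.IH] dominating.hyps(2) by blast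
  qed
  then show ?thesis
    unfolding threshold_graph_def threshold_hg_iff_threshold_on by blast
qed

lemma maximal_cliqueE:
  assumes "finite V" "clique V E C"
  obtains K where "maximal_clique V E K" "C \<subseteq> K"
proof -
  have "finite {K. clique V E K}"
    by (rule finite_subset[of _ "Pow V"]) (use assms(1) in \<open>auto simp: clique_def\<close>)
  from finite_has_maximal2[OF this, of C] assms(2) obtain K
    where "clique V E K" "C \<subseteq> K" "\<forall>L. clique V E L \<longrightarrow> K \<subseteq> L \<longrightarrow> K = L"
    by auto
  then show ?thesis using that unfolding maximal_clique_def by blast
qed

lemma maximal_clique_subset: "maximal_clique V E K \<Longrightarrow> K \<subseteq> V"
  unfolding maximal_clique_def clique_def by simp

lemma maximal_clique_nonempty:
  assumes "maximal_clique V E K" "u \<in> V"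
  shows "K \<noteq> {}"
proof
  assume "K = {}"
  moreover have "clique V E {u}" using assms(2) unfolding clique_def by simp
  ultimately show False using assms(1) unfolding maximal_clique_def by blast
qed

lemma clique_insert_dominating_iff:
  assumes "\<forall>y\<in>U. {v, y} \<in> E"
  shows "clique (insert v U) E K \<longleftrightarrow> clique U E (K - {v})"
proof -
  have "{x, y} \<in> E" if "clique U E (K - {v})" "x \<in> K" "y \<in> K" "x \<noteq> y" for x y
    using that assms unfolding clique_def
    by (cases "x = v"; cases "y = v") (auto simp: insert_commute)
  then show ?thesis unfolding clique_def by blast
qed

lemma maximal_clique_insert_dominating_iff:
  assumes "v \<notin> U" "\<forall>y\<in>U. {v, y} \<in> E"
  shows "maximal_clique (insert v U) E K \<longleftrightarrow> v \<in> K \<and> maximal_clique U E (K - {v})"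
proof
  assume K: "maximal_clique (insert v U) E K"
  note clique_iff = clique_insert_dominating_iff[OF assms(2)]
  have "clique U E (K - {v})" using K unfolding maximal_clique_def clique_iff by blast
  then have "clique (insert v U) E (insert v K)" unfolding clique_iff by simp
  then have "v \<in> K" using K unfolding maximal_clique_def by blast
  moreover have "L = K - {v}" if L: "clique U E L" "K - {v} \<subseteq> L" for L
  proof -
    have "v \<notin> L" using L(1) assms(1) unfolding clique_def by blast
    then have "clique (insert v U) E (insert v L)" using L(1) unfolding clique_iff by simp
    moreover have "K \<subseteq> insert v L" using L(2) by blast
    ultimately have "insert v L = K" using K unfolding maximal_clique_def by blast
    then show ?thesis using \<open>v \<notin> L\<close> by blast
  qed
  ultimately show "v \<in> K \<and> maximal_clique U E (K - {v})"
    using \<open>clique U E (K - {v})\<close> unfolding maximal_clique_def by blast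
next
  assume K: "v \<in> K \<and> maximal_clique U E (K - {v})"
  note clique_iff = clique_insert_dominating_iff[OF assms(2)]
  have "L = K" if L: "clique (insert v U) E L" "K \<subseteq> L" for L
  proof -
    have "clique U E (L - {v})" "K - {v} \<subseteq> L - {v}" using L unfolding clique_iff by auto
    then have "L - {v} = K - {v}" using K unfolding maximal_clique_def by blast
    then show ?thesis using K L(2) by blast
  qed
  moreover have "clique (insert v U) E K" using K unfolding clique_iff maximal_clique_def by blast
  ultimately show "maximal_clique (insert v U) E K" unfolding maximal_clique_def by blast
qed

lemma dependent_clique_edges_insert_dominating:
  assumes "v \<notin> U" "\<forall>y\<in>U. {v, y} \<in> E"
  shows "dependent (clique_edges (insert v U) E) X \<longleftrightarrow>
    v \<in> X \<and> dependent (clique_edges U E) (X - {v})"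
proof
  assume "dependent (clique_edges (insert v U) E) X"
  then obtain K where K: "maximal_clique (insert v U) E K" "K \<subseteq> X"
    unfolding dependent_def clique_edges_def by blast
  then have "v \<in> K" "K - {v} \<in> clique_edges U E"
    using maximal_clique_insert_dominating_iff[OF assms, of K] unfolding clique_edges_def by simp_all
  with K(2) show "v \<in> X \<and> dependent (clique_edges U E) (X - {v})"
    unfolding dependent_def by (intro conjI bexI[of _ "K - {v}"]) auto
next
  assume "v \<in> X \<and> dependent (clique_edges U E) (X - {v})"
  then obtain K where K: "v \<in> X" "maximal_clique U E K" "K \<subseteq> X - {v}"
    unfolding dependent_def clique_edges_def by blast
  then have "insert v K - {v} = K" using maximal_clique_subset[OF K(2)] assms(1) by blast
  then have "maximal_clique (insert v U) E (insert v K)"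
    using K(2) maximal_clique_insert_dominating_iff[OF assms, of "insert v K"] by simp
  with K show "dependent (clique_edges (insert v U) E) X"
    unfolding dependent_def clique_edges_def by (intro bexI[of _ "insert v K"]) auto
qed

lemma clique_insert_isolated:
  assumes "\<forall>y\<in>U. {v, y} \<notin> E" "clique (insert v U) E K" "v \<in> K"
  shows "K = {v}"
proof (intro equalityI subsetI)
  fix x assume "x \<in> K"
  show "x \<in> {v}"
  proof (rule ccontr)
    assume "x \<notin> {v}"
    then have "x \<in> U" "{v, x} \<in> E" using assms(2,3) \<open>x \<in> K\<close> unfolding clique_def by auto
    then show False using assms(1) by simp
  qed
qed (use assms(3) in simp)

lemma maximal_clique_insert_isolated_iff:
  assumes "v \<notin> U" "U \<noteq> {}" "\<forall>y\<in>U. {v, y} \<notin> E"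
  shows "maximal_clique (insert v U) E K \<longleftrightarrow> K = {v} \<or> maximal_clique U E K"
proof
  assume K: "maximal_clique (insert v U) E K"
  show "K = {v} \<or> maximal_clique U E K"
  proof (cases "v \<in> K")
    case True
    then show ?thesis using K clique_insert_isolated[OF assms(3)] unfolding maximal_clique_def by blast
  next
    case False
    then have "clique U E K" using K unfolding maximal_clique_def clique_def by blast
    moreover have "clique (insert v U) E L" if "clique U E L" for L
      using that unfolding clique_def by blast
    ultimately show ?thesis using K unfolding maximal_clique_def by blast
  qed
next
  have clique_v: "clique (insert v U) E {v}" unfolding clique_def by simp
  assume "K = {v} \<or> maximal_clique U E K"
  then show "maximal_clique (insert v U) E K"
  proof
    assume "K = {v}"
    then show ?thesis
      using clique_v clique_insert_isolated[OF assms(3)] unfolding maximal_clique_def by blast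
  next
    assume K: "maximal_clique U E K"
    obtain u where "u \<in> U" using assms(2) by blast
    then have "K \<noteq> {}" "v \<notin> K"
      using maximal_clique_nonempty[OF K] maximal_clique_subset[OF K] assms(1) by blast+
    have "L = K" if L: "clique (insert v U) E L" "K \<subseteq> L" for L
    proof -
      have "v \<notin> L" using clique_insert_isolated[OF assms(3) L(1)] L(2) \<open>K \<noteq> {}\<close> \<open>v \<notin> K\<close> by blast
      then have "clique U E L" using L(1) unfolding clique_def by blast
      then show ?thesis using K L(2) unfolding maximal_clique_def by blast
    qed
    moreover have "clique (insert v U) E K" using K unfolding maximal_clique_def clique_def by blast
    ultimately show ?thesis unfolding maximal_clique_def by blast
  qed
qed

lemma dependent_clique_edges_insert_isolated:
  assumes "v \<notin> U" "U \<noteq> {}" "\<forall>y\<in>U. {v, y} \<notin> E"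
  shows "dependent (clique_edges (insert v U) E) X \<longleftrightarrow> v \<in> X \<or> dependent (clique_edges U E) X"
  unfolding dependent_def clique_edges_def mem_Collect_eq maximal_clique_insert_isolated_iff[OF assms]
  by blast

lemma threshold_clique_hypergraph_if_no_alternating_4_cycle:
  assumes G: "simple_graph V E" and no_ac4: "\<And>a b c d. \<not> alternating_4_cycle E a b c d"
  shows "threshold_hg V (clique_edges V E)"
proof -
  have "threshold_on U (dependent (clique_edges U E))" if "U \<subseteq> V" for U
    using G no_ac4 that
  proof (induction rule: no_alternating_4_cycle_induct)
    case empty
    show ?case by (rule threshold_on_empty)
  next
    case (isolated U v)
    show ?case
      using threshold_on_insert_or[OF simple_graph_finite_subset[OF G isolated.hyps(1)]
          isolated.IH isolated.hyps(2)]
        dependent_clique_edges_insert_isolated[OF isolated.hyps(2-4)] by blast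
  next
    case (dominating U v)
    show ?case
      using threshold_on_insert_and[OF simple_graph_finite_subset[OF G dominating.hyps(1)]
          dominating.IH dominating.hyps(2)]
        dependent_clique_edges_insert_dominating[OF dominating.hyps(2,3)] by blast
  qed
  then show ?thesis unfolding threshold_hg_iff_threshold_on by blast
qed

lemma is_singleton_if_no_disjoint_pairs:
  assumes "A \<noteq> {}" "B \<noteq> {}"
    and left_total: "\<forall>a\<in>A. \<exists>b\<in>B. R a b" and right_total: "\<forall>b\<in>B. \<exists>a\<in>A. R a b"
    and disjoint: "\<And>a a' b b'. a \<in> A \<Longrightarrow> a' \<in> A \<Longrightarrow> b \<in> B \<Longrightarrow> b' \<in> B \<Longrightarrow>
      a \<noteq> a' \<Longrightarrow> b \<noteq> b' \<Longrightarrow> R a b \<Longrightarrow> R a' b' \<Longrightarrow> False"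
  shows "is_singleton A \<or> is_singleton B"
proof (rule ccontr)
  assume "\<not> (is_singleton A \<or> is_singleton B)"
  then have two_A: "\<exists>a'\<in>A. a' \<noteq> a" and two_B: "\<exists>b'\<in>B. b' \<noteq> b" for a b
    using assms(1,2) is_singletonI'[of A] is_singletonI'[of B] by metis+
  obtain a where a: "a \<in> A" using assms(1) by blast
  then obtain b where b: "b \<in> B" "R a b" using left_total by blast
  obtain a' where a': "a' \<in> A" "a' \<noteq> a" using two_A by blast
  obtain z where "z \<in> B" "R a' z" using left_total a'(1) by blast
  then have "R a' b" using disjoint[of a a' b z] a a' b by (cases "z = b") auto
  obtain b' where b': "b' \<in> B" "b' \<noteq> b" using two_B by blast
  obtain y where "y \<in> A" "R y b'" using right_total b'(1) by blast
  then have "R a b'" using disjoint[of y a b' b] a b b' by (cases "y = a") auto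
  then show False using disjoint[of a a' b' b] a a' b b' \<open>R a' b\<close> by blast
qed

lemma min_card_eq_1_iff_is_singleton:
  assumes "finite A" "finite B" "A \<noteq> {}" "B \<noteq> {}"
  shows "min (card A) (card B) = 1 \<longleftrightarrow> is_singleton A \<or> is_singleton B"
proof -
  have "card A > 0" "card B > 0" using assms by (simp_all add: card_gt_0_iff)
  then show ?thesis by (auto simp: is_singleton_altdef min_def)
qed

lemma maximal_clique_diff_nonempty:
  "maximal_clique V E e \<Longrightarrow> maximal_clique V E f \<Longrightarrow> e \<noteq> f \<Longrightarrow> e - f \<noteq> {}"
  unfolding maximal_clique_def by blast

lemma one_sperner_clique_edges_iff:
  assumes "finite V"
  shows "one_sperner (clique_edges V E) \<longleftrightarrow>
    (\<forall>e f. maximal_clique V E e \<longrightarrow> maximal_clique V E f \<longrightarrow> e \<noteq> f \<longrightarrow>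
      is_singleton (e - f) \<or> is_singleton (f - e))"
proof -
  have "min (card (e - f)) (card (f - e)) = 1 \<longleftrightarrow> is_singleton (e - f) \<or> is_singleton (f - e)"
    if ef: "maximal_clique V E e" "maximal_clique V E f" "e \<noteq> f" for e f
  proof (rule min_card_eq_1_iff_is_singleton)
    show "finite (e - f)" "finite (f - e)"
      using assms maximal_clique_subset[OF ef(1)] maximal_clique_subset[OF ef(2)]
      by (auto intro: finite_subset)
    show "e - f \<noteq> {}" "f - e \<noteq> {}"
      using maximal_clique_diff_nonempty ef by metis+
  qed
  then show ?thesis unfolding one_sperner_def clique_edges_def by auto
qed

lemma maximal_clique_adjacent:
  "maximal_clique V E K \<Longrightarrow> x \<in> K \<Longrightarrow> y \<in> K \<Longrightarrow> x \<noteq> y \<Longrightarrow> {x, y} \<in> E"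
  unfolding maximal_clique_def clique_def by simp

lemma maximal_clique_non_neighbourE:
  assumes K: "maximal_clique V E K" and x: "x \<in> V" "x \<notin> K"
  obtains z where "z \<in> K" "z \<noteq> x" "{x, z} \<notin> E"
proof -
  have "\<exists>z\<in>K. z \<noteq> x \<and> {x, z} \<notin> E"
  proof (rule ccontr)
    assume "\<not> (\<exists>z\<in>K. z \<noteq> x \<and> {x, z} \<notin> E)"
    then have adj: "{x, z} \<in> E" if "z \<in> K" "z \<noteq> x" for z using that by blast
    have "clique V E (insert x K)"
      unfolding clique_def
    proof (intro conjI ballI impI)
      show "insert x K \<subseteq> V" using x(1) maximal_clique_subset[OF K] by simp
    next
      fix p q assume "p \<in> insert x K" "q \<in> insert x K" "p \<noteq> q"
      then show "{p, q} \<in> E"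
        using adj maximal_clique_adjacent[OF K] by (auto simp: insert_commute)
    qed
    then show False using K x(2) unfolding maximal_clique_def by blast
  qed
  then show ?thesis using that by blast
qed

lemma maximal_clique_non_neighbour_in_diffE:
  assumes e: "maximal_clique V E e" and f: "maximal_clique V E f" and x: "x \<in> e - f"
  obtains z where "z \<in> f - e" "{x, z} \<notin> E"
proof -
  have "x \<in> V" using x maximal_clique_subset[OF e] by blast
  then obtain z where z: "z \<in> f" "z \<noteq> x" "{x, z} \<notin> E"
    using maximal_clique_non_neighbourE[OF f] x by blast
  then have "z \<notin> e" using maximal_clique_adjacent[OF e] x by blast
  then show ?thesis using that z by blast
qed

lemma one_sperner_if_no_alternating_4_cycle:
  assumes G: "simple_graph V E" and no_ac4: "\<And>a b c d. \<not> alternating_4_cycle E a b c d"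
  shows "one_sperner (clique_edges V E)"
proof -
  have "finite V" using G unfolding simple_graph_def by simp
  moreover have "is_singleton (e - f) \<or> is_singleton (f - e)"
    if e: "maximal_clique V E e" and f: "maximal_clique V E f" and "e \<noteq> f" for e f
  proof (rule is_singleton_if_no_disjoint_pairs[where R = "\<lambda>a b. {a, b} \<notin> E"])
    show "e - f \<noteq> {}" "f - e \<noteq> {}" using maximal_clique_diff_nonempty e f \<open>e \<noteq> f\<close> by metis+
    show "\<forall>a\<in>e - f. \<exists>b\<in>f - e. {a, b} \<notin> E"
      using maximal_clique_non_neighbour_in_diffE[OF e f] by metis
    show "\<forall>b\<in>f - e. \<exists>a\<in>e - f. {a, b} \<notin> E"
      using maximal_clique_non_neighbour_in_diffE[OF f e] by (metis insert_commute)
  next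
    fix a a' b b'
    assume "a \<in> e - f" "a' \<in> e - f" "b \<in> f - e" "b' \<in> f - e" "a \<noteq> a'" "b \<noteq> b'"
      "{a, b} \<notin> E" "{a', b'} \<notin> E"
    then have "alternating_4_cycle E a a' b b'"
      using maximal_clique_adjacent[OF e, of a a'] maximal_clique_adjacent[OF f, of b b']
      unfolding alternating_4_cycle_def by auto
    then show False using no_ac4 by blast
  qed
  ultimately show ?thesis using one_sperner_clique_edges_iff by blast
qed

lemma no_alternating_4_cycle_if_one_sperner:
  assumes G: "simple_graph V E" and "one_sperner (clique_edges V E)"
  shows "\<not> alternating_4_cycle E a b c d"
proof
  assume "alternating_4_cycle E a b c d"
  then have ac: "a \<noteq> c" "b \<noteq> d" "{a, b} \<in> E" "{c, d} \<in> E" "{a, c} \<notin> E" "{b, d} \<notin> E"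
    unfolding alternating_4_cycle_def by blast+
  have "finite V" using G unfolding simple_graph_def by simp
  have "clique V E {x, y}" if "{x, y} \<in> E" for x y
    using that simple_graph_edge_in_vertices[OF G that] unfolding clique_def by (auto simp: insert_commute)
  then obtain e f where e: "maximal_clique V E e" "{a, b} \<subseteq> e"
    and f: "maximal_clique V E f" "{c, d} \<subseteq> f"
    using maximal_cliqueE[OF \<open>finite V\<close>] ac(3,4) by metis
  have "c \<notin> e" "d \<notin> e" "a \<notin> f" "b \<notin> f"
    using ac maximal_clique_adjacent[OF e(1)] maximal_clique_adjacent[OF f(1)] e(2) f(2)
    by (metis insert_subset)+
  then have "{a, b} \<subseteq> e - f" "{c, d} \<subseteq> f - e" "e \<noteq> f" using e(2) f(2) by auto
  moreover have "a \<noteq> b" "c \<noteq> d" using ac(3,4) simple_graph_edge_distinct[OF G] by blast+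
  moreover have "\<not> is_singleton S" if "{p, q} \<subseteq> S" "p \<noteq> q" for S and p q :: 'a
    using that unfolding is_singleton_def by auto
  moreover have "is_singleton (e - f) \<or> is_singleton (f - e)"
    using assms(2) e(1) f(1) \<open>e \<noteq> f\<close>
    unfolding one_sperner_clique_edges_iff[OF \<open>finite V\<close>] by metis
  ultimately show False by metis
qed

lemma maximal_clique_in_exchange_contains:
  assumes e: "maximal_clique V E e" and "x \<in> e" "y \<notin> e"
    and K: "maximal_clique V E K" "K \<subseteq> insert y (e - {x})"
  shows "y \<in> K"
proof (rule ccontr)
  assume "y \<notin> K"
  then have "K \<subseteq> e" using K(2) by blast
  then have "K = e" using K(1) e unfolding maximal_clique_def by blast
  then show False using K(2) \<open>x \<in> e\<close> \<open>y \<notin> e\<close> by blast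
qed

text \<open>Exchanging \<open>x \<in> e\<close> for a neighbour \<open>y\<close> of \<open>x\<close> leaves no room for a maximal clique:
  one containing \<open>y\<close> could be extended by \<open>x\<close>.\<close>

lemma independent_exchange_adjacent:
  assumes e: "maximal_clique V E e" and "x \<in> e" "y \<notin> e" "{x, y} \<in> E"
  shows "\<not> dependent (clique_edges V E) (insert y (e - {x}))"
proof
  assume "dependent (clique_edges V E) (insert y (e - {x}))"
  then obtain K where K: "maximal_clique V E K" "K \<subseteq> insert y (e - {x})"
    unfolding dependent_def clique_edges_def by blast
  have "y \<in> K" by (rule maximal_clique_in_exchange_contains[OF e assms(2,3) K])
  have "x \<notin> K" using K(2) \<open>y \<notin> e\<close> \<open>x \<in> e\<close> by blast
  moreover have "{x, z} \<in> E" if "z \<in> K" "z \<noteq> x" for z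
  proof (cases "z = y")
    case True
    then show ?thesis using assms(4) by simp
  next
    case False
    then show ?thesis using that K(2) maximal_clique_adjacent[OF e] \<open>x \<in> e\<close> by blast
  qed
  moreover have "x \<in> V" using \<open>x \<in> e\<close> maximal_clique_subset[OF e] by blast
  ultimately show False using maximal_clique_non_neighbourE[OF K(1)] by metis
qed

text \<open>If \<open>y \<in> f - e\<close> has no neighbour in \<open>e - f\<close>, a maximal clique containing \<open>y\<close> inside the
  exchanged set lies in \<open>f\<close>, hence is \<open>f\<close>; this needs a second vertex in \<open>f - e\<close>.\<close>

lemma independent_exchange_non_adjacent:
  assumes e: "maximal_clique V E e" and f: "maximal_clique V E f"
    and "x \<in> e - f" "y \<in> f - e" "\<forall>z\<in>e - f. {z, y} \<notin> E" "f - e \<noteq> {y}"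
  shows "\<not> dependent (clique_edges V E) (insert y (e - {x}))"
proof
  assume "dependent (clique_edges V E) (insert y (e - {x}))"
  then obtain K where K: "maximal_clique V E K" "K \<subseteq> insert y (e - {x})"
    unfolding dependent_def clique_edges_def by blast
  have "y \<in> K" using maximal_clique_in_exchange_contains[OF e _ _ K] assms(3,4) by blast
  have "z \<in> f" if "z \<in> K" for z
  proof (cases "z = y")
    case True
    then show ?thesis using assms(4) by simp
  next
    case False
    then have "z \<in> e" "{z, y} \<in> E"
      using that K maximal_clique_adjacent[OF K(1) that \<open>y \<in> K\<close>] by auto
    then show ?thesis using assms(5) by blast
  qed
  then have "K = f" using K(1) f unfolding maximal_clique_def by blast
  then show False using K(2) assms(4,6) by blast
qed

lemma one_sperner_if_two_asummable:
  assumes G: "simple_graph V E" and asum: "two_asummable V (clique_edges V E)"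
  shows "one_sperner (clique_edges V E)"
proof -
  have "finite V" using G unfolding simple_graph_def by simp
  moreover have "is_singleton (e - f) \<or> is_singleton (f - e)"
    if e: "maximal_clique V E e" and f: "maximal_clique V E f" and "e \<noteq> f" for e f
  proof (rule ccontr)
    assume not_singleton: "\<not> (is_singleton (e - f) \<or> is_singleton (f - e))"
    have "e - f \<noteq> {}" "f - e \<noteq> {}" using maximal_clique_diff_nonempty e f \<open>e \<noteq> f\<close> by metis+
    then obtain x y where xy: "x \<in> e - f" "y \<in> f - e"
      and adj: "{x, y} \<in> E \<or> (\<forall>z\<in>e - f. \<forall>u\<in>f - e. {z, u} \<notin> E)"
      by blast
    have "e - f \<noteq> {x}" "f - e \<noteq> {y}" using not_singleton by auto
    from adj have indep: "\<not> dependent (clique_edges V E) (insert y (e - {x})) \<and>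
      \<not> dependent (clique_edges V E) (insert x (f - {y}))"
    proof
      assume "{x, y} \<in> E"
      then show ?thesis
        using independent_exchange_adjacent[OF e, of x y] independent_exchange_adjacent[OF f, of y x] xy
        by (simp_all add: insert_commute)
    next
      assume separated: "\<forall>z\<in>e - f. \<forall>u\<in>f - e. {z, u} \<notin> E"
      then have "\<forall>z\<in>e - f. {z, y} \<notin> E" using xy by blast
      moreover have "\<forall>z\<in>f - e. {z, x} \<notin> E"
        using separated xy(1) by (metis insert_commute)
      ultimately show ?thesis
        using independent_exchange_non_adjacent[OF e f, of x y]
          independent_exchange_non_adjacent[OF f e, of y x] xy \<open>e - f \<noteq> {x}\<close> \<open>f - e \<noteq> {y}\<close>
        by simp_all
    qed
    have dep: "dependent (clique_edges V E) e" "dependent (clique_edges V E) f"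
      using e f unfolding dependent_def clique_edges_def by auto
    have chi_eq: "\<forall>z\<in>V. chi (insert y (e - {x})) z + chi (insert x (f - {y})) z = chi e z + chi f z"
      using xy by (auto simp: chi_def)
    have sub: "insert y (e - {x}) \<subseteq> V" "insert x (f - {y}) \<subseteq> V" "e \<subseteq> V" "f \<subseteq> V"
      using xy maximal_clique_subset[OF e] maximal_clique_subset[OF f] by auto
    from asum show False
      unfolding two_asummable_def using sub dep chi_eq indep by blast
  qed
  ultimately show ?thesis using one_sperner_clique_edges_iff by blast
qed

theorem theorem20:
  fixes V :: "'a set" and E :: "'a set set"
  assumes "simple_graph V E"
  shows "(threshold_graph V E \<longleftrightarrow> one_sperner (clique_edges V E))
       \<and> (one_sperner (clique_edges V E) \<longleftrightarrow> threshold_hg V (clique_edges V E))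
       \<and> (threshold_hg V (clique_edges V E) \<longleftrightarrow> two_asummable V (clique_edges V E))"
proof -
  have "finite V" using assms unfolding simple_graph_def by simp
  let ?no_ac4 = "\<forall>a b c d. \<not> alternating_4_cycle E a b c d"
  have "threshold_graph V E \<longleftrightarrow> ?no_ac4"
    using threshold_graph_if_no_alternating_4_cycle[OF assms]
      no_alternating_4_cycle_if_two_asummable[OF assms]
      two_asummable_if_threshold_hg[OF \<open>finite V\<close>]
    unfolding threshold_graph_def by metis
  moreover have "one_sperner (clique_edges V E) \<longleftrightarrow> ?no_ac4"
    using one_sperner_if_no_alternating_4_cycle[OF assms]
      no_alternating_4_cycle_if_one_sperner[OF assms] by metis
  moreover have "?no_ac4 \<Longrightarrow> threshold_hg V (clique_edges V E)"
    using threshold_clique_hypergraph_if_no_alternating_4_cycle[OF assms] by metis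
  moreover have "threshold_hg V (clique_edges V E) \<Longrightarrow> two_asummable V (clique_edges V E)"
    by (rule two_asummable_if_threshold_hg[OF \<open>finite V\<close>])
  moreover have "two_asummable V (clique_edges V E) \<Longrightarrow> one_sperner (clique_edges V E)"
    by (rule one_sperner_if_two_asummable[OF assms])
  ultimately show ?thesis by blast
qed

end
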